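(* Let $\rho_x=\frac12(I+\vec v_x\cdot\vec\sigma)$, $x=1,2,3$, be qubit states with equal purity $\|\vec v_1\|=\|\vec v_2\|=\|\vec v_3\|=f$, given with equal prior probabilities $1/3$, and suppose the convex hull of $\vec v_1,\vec v_2,\vec v_3$ contains the origin. Then $$P_{\mathrm{guess}}=\frac13+\frac13 f,$$ independently of any other details of the states (e.g. the angles between them).
   Context: $\vec\sigma=(X,Y,Z)$ are the Pauli matrices; the purity of a qubit state is the Euclidean norm of its Bloch vector. $P_{\mathrm{guess}}=\max\sum_{x=1}^3\frac13\mathrm{tr}[M_x\rho_x]$ over POVMs $\{M_x\}_{x=1}^3$ (positive semidefinite operators summing to $I$). *)

theory Defs
  imports "HOL-Analysis.Analysis"
begin

type_synonym qmat = "complex^2^2"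

definition pauliX :: qmat where
  "pauliX = (\<chi> i j. if i \<noteq> j then 1 else 0)"
definition pauliY :: qmat where
  "pauliY = (\<chi> i j. if i = 0 \<and> j = 1 then - \<i> else if i = 1 \<and> j = 0 then \<i> else 0)"
definition pauliZ :: qmat where
  "pauliZ = (\<chi> i j. if i = j then (if i = 0 then 1 else -1) else 0)"

definition psd :: "qmat \<Rightarrow> bool" where
  "psd A \<longleftrightarrow> (\<forall>x::complex^2. let q = (\<Sum>i\<in>UNIV. \<Sum>j\<in>UNIV. cnj (x $ i) * A $ i $ j * x $ j)
                                  in Im q = 0 \<and> 0 \<le> Re q)"

definition bloch_state :: "real^3 \<Rightarrow> qmat" where
  "bloch_state v = (1/2) *\<^sub>R (mat 1 + v $ 1 *\<^sub>R pauliX + v $ 2 *\<^sub>R pauliY + v $ 3 *\<^sub>R pauliZ)"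

definition povm3 :: "(nat \<Rightarrow> qmat) \<Rightarrow> bool" where
  "povm3 M \<longleftrightarrow> (\<forall>x\<in>{1,2,3}. psd (M x)) \<and> M 1 + M 2 + M 3 = mat 1"

definition success_prob :: "(nat \<Rightarrow> qmat) \<Rightarrow> (nat \<Rightarrow> qmat) \<Rightarrow> real" where
  "success_prob M \<rho> = (\<Sum>x\<in>{1,2,3::nat}. (1/3) * Re (trace (M x ** \<rho> x)))"

text \<open>Optimal guessing probability (the maximum is attained, so Sup = max).\<close>
definition P_guess :: "(nat \<Rightarrow> qmat) \<Rightarrow> real" where
  "P_guess \<rho> = Sup {success_prob M \<rho> | M. povm3 M}"

end

theory Submission
  imports Defs
begin

text \<open>Every Hermitian 2x2 matrix can be written as \<open>(t I + u\<cdot>\<sigma>)/2\<close>, and it is positive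
  semidefinite exactly when \<open>|u| \<le> t\<close> (the Bloch ball). Since
  \<open>tr(A \<rho>\<^sub>v) = (t + u\<cdot>v)/2\<close>, Cauchy-Schwarz bounds each term of the success probability by
  \<open>(1 + f)/2 \<cdot> tr A\<close>; the traces of a POVM sum to 2, so no measurement beats \<open>(1 + f)/3\<close>.
  The bound is attained by \<open>M\<^sub>x = \<lambda>\<^sub>x (I + v\<^sub>x\<cdot>\<sigma>/f)\<close>, where \<open>\<lambda>\<close> are the weights of a convex
  combination of the \<open>v\<^sub>x\<close> giving 0: these elements sum to the identity precisely because
  \<open>\<Sum> \<lambda>\<^sub>x v\<^sub>x = 0\<close>.\<close>

lemma numeral_2_eq_0_type_2 [simp]: "(2::2) = 0"
  by simp

lemma forall_UNIV_2: "(\<forall>i::2. P i) \<longleftrightarrow> P 0 \<and> P 1"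
  using forall_2[of P] by (simp add: conj_commute)

lemma sum_UNIV_2: "(\<Sum>i\<in>(UNIV::2 set). g i) = g 0 + g 1"
  using sum_2[of g] by (simp add: add.commute)

definition pauli_op :: "real \<Rightarrow> real^3 \<Rightarrow> qmat" where
  "pauli_op t u = (1/2) *\<^sub>R (t *\<^sub>R mat 1 + u $ 1 *\<^sub>R pauliX + u $ 2 *\<^sub>R pauliY + u $ 3 *\<^sub>R pauliZ)"

lemma pauli_op_entries:
  "pauli_op t u $ 0 $ 0 = complex_of_real ((t + u$3) / 2)"
  "pauli_op t u $ 1 $ 1 = complex_of_real ((t - u$3) / 2)"
  "pauli_op t u $ 0 $ 1 = Complex (u$1 / 2) (- u$2 / 2)"
  "pauli_op t u $ 1 $ 0 = Complex (u$1 / 2) (u$2 / 2)"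
  by (simp_all add: pauli_op_def pauliX_def pauliY_def pauliZ_def mat_def complex_eq_iff)

lemma bloch_state_eq_pauli_op: "bloch_state v = pauli_op 1 v"
  by (simp add: bloch_state_def pauli_op_def)

lemma pauli_op_add: "pauli_op t u + pauli_op s w = pauli_op (t + s) (u + w)"
  by (simp add: vec_eq_iff forall_UNIV_2 pauli_op_entries complex_eq_iff field_simps)

lemma pauli_op_two_zero: "pauli_op 2 0 = mat 1"
  by (simp add: vec_eq_iff forall_UNIV_2 pauli_op_entries mat_def complex_eq_iff)

lemma inner_real3: "(u::real^3) \<bullet> w = u$1 * w$1 + u$2 * w$2 + u$3 * w$3"
  by (simp add: inner_vec_def sum_3)

lemma Re_trace_pauli_op: "Re (trace (pauli_op t u)) = t"
  by (simp add: trace_def sum_UNIV_2 pauli_op_entries field_simps)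

lemma Re_trace_mult_pauli_op:
  "Re (trace (pauli_op t u ** pauli_op s w)) = (t * s + u \<bullet> w) / 2"
  by (simp add: trace_def matrix_matrix_mult_def sum_UNIV_2 pauli_op_entries inner_real3 field_simps)

lemma quadratic_form_UNIV_2:
  "(\<Sum>i\<in>UNIV. \<Sum>j\<in>UNIV. cnj ((x::complex^2) $ i) * (A::qmat) $ i $ j * x $ j) =
    cnj (x$0) * A$0$0 * x$0 + cnj (x$0) * A$0$1 * x$1 + cnj (x$1) * A$1$0 * x$0 + cnj (x$1) * A$1$1 * x$1"
  by (simp add: sum_UNIV_2 algebra_simps)

definition spinor_bloch :: "complex \<Rightarrow> complex \<Rightarrow> real^3" where
  "spinor_bloch a b = vector [2 * Re (cnj a * b), 2 * Im (cnj a * b), (cmod a)^2 - (cmod b)^2]"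

lemma norm_spinor_bloch: "norm (spinor_bloch a b) = (cmod a)^2 + (cmod b)^2"
proof -
  have "(norm (spinor_bloch a b))^2 = spinor_bloch a b \<bullet> spinor_bloch a b"
    by (rule power2_norm_eq_inner)
  also have "\<dots> = ((cmod a)^2 + (cmod b)^2)^2"
    unfolding inner_real3 spinor_bloch_def cmod_power2
    by (simp add: power2_eq_square algebra_simps)
  finally have "(norm (spinor_bloch a b))^2 = ((cmod a)^2 + (cmod b)^2)^2" .
  then show ?thesis by (simp add: power2_eq_iff_nonneg)
qed

lemma quadratic_form_pauli_op:
  "cnj a * pauli_op t u $0$0 * a + cnj a * pauli_op t u $0$1 * b
     + cnj b * pauli_op t u $1$0 * a + cnj b * pauli_op t u $1$1 * b
   = complex_of_real ((t * ((cmod a)^2 + (cmod b)^2) + u \<bullet> spinor_bloch a b) / 2)"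
  unfolding spinor_bloch_def cmod_power2
  by (simp add: pauli_op_entries inner_real3 complex_eq_iff power2_eq_square field_simps)

lemma psd_quadratic_form:
  fixes a b :: complex
  assumes "psd A"
  defines "Q \<equiv> cnj a * A$0$0 * a + cnj a * A$0$1 * b + cnj b * A$1$0 * a + cnj b * A$1$1 * b"
  shows "Im Q = 0" and "0 \<le> Re Q"
proof -
  define x :: "complex^2" where "x = (\<chi> i. if i = 0 then a else b)"
  have "x $ 0 = a" "x $ 1 = b" by (simp_all add: x_def)
  then show "Im Q = 0" "0 \<le> Re Q"
    using assms(1) unfolding psd_def Let_def quadratic_form_UNIV_2 Q_def
    by (metis (no_types, lifting))+
qed

lemma psd_hermitian:
  assumes "psd A"
  shows "Im (A$0$0) = 0" and "Im (A$1$1) = 0" and "A$1$0 = cnj (A$0$1)"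
proof -
  note Q = psd_quadratic_form(1)[OF assms]
  show diag: "Im (A$0$0) = 0" "Im (A$1$1) = 0" using Q[of 1 0] Q[of 0 1] by simp_all
  have "Im (A$0$1) + Im (A$1$0) = 0" using Q[of 1 1] diag by simp
  moreover have "Re (A$0$1) = Re (A$1$0)" using Q[of 1 \<i>] diag by simp
  ultimately show "A$1$0 = cnj (A$0$1)" by (simp add: complex_eq_iff)
qed

lemma hermitian_eq_pauli_op:
  assumes "Im (A$0$0) = 0" and "Im (A$1$1) = 0" and "A$1$0 = cnj (A$0$1)"
  shows "A = pauli_op (Re (A$0$0) + Re (A$1$1))
                      (vector [2 * Re (A$0$1), - 2 * Im (A$0$1), Re (A$0$0) - Re (A$1$1)])"
  using assms by (simp add: vec_eq_iff forall_UNIV_2 pauli_op_entries complex_eq_iff)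

lemma psd_pauli_op_iff: "psd (pauli_op t u) \<longleftrightarrow> norm u \<le> t"
proof
  assume "psd (pauli_op t u)"
  then have Q: "0 \<le> t * ((cmod a)^2 + (cmod b)^2) + u \<bullet> spinor_bloch a b" for a b
    using psd_quadratic_form(2)[of "pauli_op t u" a b] unfolding quadratic_form_pauli_op by simp
  define N where "N = norm u"
  have "u$3 \<le> t" using Q[of 0 1] by (simp add: spinor_bloch_def inner_real3)
  have "\<bar>u$3\<bar> \<le> N" using component_le_norm_cart[of u 3] by (simp add: N_def)
  have "0 \<le> 2 * N * (N - u$3) * (t - N)"
  proof -
    have N2: "(u$1)^2 + (u$2)^2 = N^2 - (u$3)^2"
      using power2_norm_eq_inner[of u] by (simp add: N_def inner_real3 power2_eq_square)
    \<comment> \<open>a spinor whose Bloch vector points in the direction of \<open>-u\<close>\<close>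
    define a where "a = complex_of_real (N - u$3)"
    define b where "b = - Complex (u$1) (u$2)"
    have "t * ((cmod a)^2 + (cmod b)^2) + u \<bullet> spinor_bloch a b
        = t * ((N - u$3)^2 + ((u$1)^2 + (u$2)^2)) - 2 * (N - u$3) * ((u$1)^2 + (u$2)^2)
          + u$3 * ((N - u$3)^2 - ((u$1)^2 + (u$2)^2))"
      unfolding a_def b_def spinor_bloch_def cmod_power2
      by (simp add: inner_real3 power2_eq_square algebra_simps)
    also have "\<dots> = 2 * N * (N - u$3) * (t - N)"
      unfolding N2 by (simp add: power2_eq_square algebra_simps)
    finally show ?thesis using Q[of a b] by linarith
  qed
  show "norm u \<le> t"
  proof (cases "N = u$3")
    case True
    then show ?thesis using \<open>u$3 \<le> t\<close> by (simp add: N_def)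
  next
    case False
    then have "0 < 2 * N * (N - u$3)" using \<open>\<bar>u$3\<bar> \<le> N\<close> by simp
    then show ?thesis
      using \<open>0 \<le> 2 * N * (N - u$3) * (t - N)\<close> by (simp add: N_def zero_le_mult_iff)
  qed
next
  assume u: "norm u \<le> t"
  have "0 \<le> t * ((cmod a)^2 + (cmod b)^2) + u \<bullet> spinor_bloch a b" for a b
  proof -
    have "- (norm u * norm (spinor_bloch a b)) \<le> u \<bullet> spinor_bloch a b"
      using Cauchy_Schwarz_ineq2[of u "spinor_bloch a b"] by linarith
    moreover have "norm u * norm (spinor_bloch a b) \<le> t * ((cmod a)^2 + (cmod b)^2)"
      unfolding norm_spinor_bloch using u by (simp add: mult_right_mono)
    ultimately show ?thesis by linarith
  qed
  then show "psd (pauli_op t u)"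
    unfolding psd_def Let_def quadratic_form_UNIV_2 quadratic_form_pauli_op by simp
qed

lemma psd_obtain_pauli_op:
  assumes "psd A"
  obtains t u where "A = pauli_op t u" and "norm u \<le> t"
proof -
  have "A = pauli_op (Re (A$0$0) + Re (A$1$1))
              (vector [2 * Re (A$0$1), - 2 * Im (A$0$1), Re (A$0$0) - Re (A$1$1)])"
    (is "A = pauli_op ?t ?u")
    using hermitian_eq_pauli_op psd_hermitian assms by blast
  moreover from this have "norm ?u \<le> ?t"
    using assms psd_pauli_op_iff by metis
  ultimately show thesis using that by blast
qed

lemma Re_trace_mult_bloch_state_le:
  assumes "psd A" and "norm v \<le> f"
  shows "Re (trace (A ** bloch_state v)) \<le> (1 + f) / 2 * Re (trace A)"
proof -
  obtain t u where A: "A = pauli_op t u" and u: "norm u \<le> t"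
    using psd_obtain_pauli_op assms(1) .
  have "u \<bullet> v \<le> norm u * norm v" by (rule norm_cauchy_schwarz)
  also have "\<dots> \<le> t * f" using u assms(2) by (simp add: mult_mono')
  finally show ?thesis
    unfolding A bloch_state_eq_pauli_op Re_trace_mult_pauli_op Re_trace_pauli_op
    by (simp add: field_simps)
qed

lemma success_prob_le:
  assumes "povm3 N" and "\<forall>x\<in>{1,2,3}. norm (v x) \<le> f"
  shows "success_prob N (\<lambda>x. bloch_state (v x)) \<le> (1 + f) / 3"
proof -
  have psd: "psd (N x)" if "x \<in> {1,2,3}" for x
    using assms(1) that unfolding povm3_def by auto
  have "Re (trace (N 1 + N 2 + N 3)) = 2"
    using assms(1) by (simp add: povm3_def trace_I)
  then have "(\<Sum>x\<in>{1,2,3::nat}. Re (trace (N x))) = 2"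
    by (simp add: trace_add)
  have "success_prob N (\<lambda>x. bloch_state (v x))
      \<le> (\<Sum>x\<in>{1,2,3::nat}. 1/3 * ((1 + f) / 2 * Re (trace (N x))))"
    unfolding success_prob_def
    using assms(2) by (intro sum_mono mult_left_mono Re_trace_mult_bloch_state_le psd) auto
  also have "\<dots> = (1 + f) / 6 * (\<Sum>x\<in>{1,2,3::nat}. Re (trace (N x)))"
    by (simp only: sum_distrib_left) (simp add: field_simps)
  also have "\<dots> = (1 + f) / 3"
    using \<open>(\<Sum>x\<in>{1,2,3::nat}. Re (trace (N x))) = 2\<close> by simp
  finally show ?thesis .
qed

lemma optimal_povm3_exists:
  assumes purity: "\<forall>x\<in>{1,2,3}. norm (v x) = f"
    and hull: "0 \<in> convex hull {v 1, v 2, v 3}"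
  shows "\<exists>M. povm3 M \<and> success_prob M (\<lambda>x. bloch_state (v x)) = (1 + f) / 3"
proof -
  obtain a b c where abc: "0 \<le> a" "0 \<le> b" "0 \<le> c" "a + b + c = 1"
    and zero: "a *\<^sub>R v 1 + b *\<^sub>R v 2 + c *\<^sub>R v 3 = 0"
    using hull unfolding convex_hull_3 by force
  define lam where "lam x = (if x = (1::nat) then a else if x = 2 then b else c)" for x
  \<comment> \<open>for \<open>f = 0\<close> the division yields 0, so \<open>M x = lam x *\<^sub>R mat 1\<close>, still optimal\<close>
  define M where "M x = pauli_op (2 * lam x) ((2 * lam x / f) *\<^sub>R v x)" for x
  have lam: "0 \<le> lam x" for x using abc by (simp add: lam_def)
  have "psd (M x)" if "x \<in> {1,2,3}" for x
  proof -
    have "norm (v x) = f" using purity that by blast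
    then show ?thesis
      using lam[of x] norm_ge_zero[of "v x"]
      by (cases "f = 0") (simp_all add: M_def psd_pauli_op_iff)
  qed
  moreover have "M 1 + M 2 + M 3 = mat 1"
  proof -
    have "M 1 + M 2 + M 3
        = pauli_op (2 * (a + b + c)) ((2 / f) *\<^sub>R (a *\<^sub>R v 1 + b *\<^sub>R v 2 + c *\<^sub>R v 3))"
      by (simp add: M_def lam_def pauli_op_add scaleR_add_right algebra_simps)
    then show ?thesis using abc(4) zero pauli_op_two_zero by simp
  qed
  moreover have "Re (trace (M x ** bloch_state (v x))) = lam x * (1 + f)" if "x \<in> {1,2,3}" for x
  proof -
    have "norm (v x) = f" using purity that by blast
    then have "v x \<bullet> v x = f^2" by (simp add: power2_norm_eq_inner[symmetric])
    then show ?thesis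
      by (simp add: M_def bloch_state_eq_pauli_op Re_trace_mult_pauli_op power2_eq_square field_simps)
  qed
  then have "success_prob M (\<lambda>x. bloch_state (v x)) = (a + b + c) * (1 + f) / 3"
    by (simp add: success_prob_def lam_def field_simps)
  then have "success_prob M (\<lambda>x. bloch_state (v x)) = (1 + f) / 3"
    using abc(4) by simp
  ultimately show ?thesis unfolding povm3_def by blast
qed

theorem mainTheorem6:
  fixes v :: "nat \<Rightarrow> real^3" and f :: real
  assumes states: "\<forall>x\<in>{1,2,3::nat}. psd (bloch_state (v x))"
    and purity: "\<forall>x\<in>{1,2,3::nat}. norm (v x) = f"
    and hull: "0 \<in> convex hull {v 1, v 2, v 3}"
  shows "P_guess (\<lambda>x. bloch_state (v x)) = 1/3 + 1/3 * f"
proof -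
  obtain M where "povm3 M" and "success_prob M (\<lambda>x. bloch_state (v x)) = 1/3 + 1/3 * f"
    using optimal_povm3_exists[OF purity hull] by (auto simp: add_divide_distrib)
  moreover have "success_prob N (\<lambda>x. bloch_state (v x)) \<le> 1/3 + 1/3 * f" if "povm3 N" for N
    using success_prob_le[OF that] purity by (simp add: add_divide_distrib)
  ultimately show ?thesis
    unfolding P_guess_def by (intro cSup_eq_maximum) (auto, metis)
qed

end
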